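(* Let $q$ be a prime power, $m>2$, $n\ge1$, and let $\mathscr{C}\subseteq\mathrm{GF}(q^m)^n$ be a scalable code. Let $f:\mathrm{GF}(q^m)^n\times\mathrm{GF}(q^m)^n\to\mathrm{GF}(q^m)$ be a biadditive form and $\tilde f$ the biadditive form on $\mathrm{GF}(q)^{mn}$ induced by $f$. Suppose $\mathrm{Im}_{\mathscr{B}}(\mathscr{C})$ is self-orthogonal w.r.t. $\tilde f$ for five bases $\mathscr{B}_1,\ldots,\mathscr{B}_5$ of $\mathrm{GF}(q^m)$ over $\mathrm{GF}(q)$ whose dual bases are $\mathscr{B}_1'=\{\beta_1,\ldots,\beta_m\}$, $\mathscr{B}_2'=\{\beta_1+\alpha\beta_2,\beta_2,\ldots,\beta_m\}$, $\mathscr{B}_3'=\{\beta_1+\gamma\beta_3,\beta_2,\ldots,\beta_m\}$, $\mathscr{B}_4'=\{\beta_1,\beta_2+\delta\beta_3,\beta_3,\ldots,\beta_m\}$ and $\mathscr{B}_5'=\{\beta_1+\alpha\beta_2+\gamma\beta_3,\beta_2,\ldots,\beta_m\}$, where $\alpha,\gamma,\delta$ are nonzero (not necessarily distinct) elements of $\mathrm{GF}(q)$. Then $\mathrm{Tr}(\mathscr{C})$ is self-orthogonal w.r.t. $f$ (restricted to $\mathrm{GF}(q)^n\times\mathrm{GF}(q)^n$), and $\mathrm{Im}_{\mathscr{B}}(\mathscr{C})$ is self-orthogonal w.r.t. $\tilde f$ for every basis $\mathscr{B}$ of $\mathrm{GF}(q^m)$ over $\mathrm{GF}(q)$.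
   Context: $\mathrm{Tr}:\mathrm{GF}(q^m)\to\mathrm{GF}(q)$, $\mathrm{Tr}(a)=\sum_{i=0}^{m-1}a^{q^i}$. The dual basis of a basis $\{\gamma_1,\ldots,\gamma_m\}$ of $\mathrm{GF}(q^m)$ over $\mathrm{GF}(q)$ is the unique basis $\{\beta_1,\ldots,\beta_m\}$ with $\mathrm{Tr}(\gamma_i\beta_j)=\delta_{ij}$. A code $\mathscr{C}\subseteq\mathrm{GF}(q^m)^n$ is scalable if $x\in\mathscr{C}\Rightarrow\alpha x\in\mathscr{C}$ for all $\alpha\in\mathrm{GF}(q^m)$. A biadditive form is additive in each argument. For a basis $\mathscr{B}$ with dual basis $\{\beta_1,\ldots,\beta_m\}$, $\mathrm{Im}_{\mathscr{B}}(\mathscr{C})=\{(\mathrm{Tr}(\beta_1x_1),\ldots,\mathrm{Tr}(\beta_1x_n),\ldots,\mathrm{Tr}(\beta_mx_1),\ldots,\mathrm{Tr}(\beta_mx_n)):x\in\mathscr{C}\}\subseteq\mathrm{GF}(q)^{mn}$, and $\mathrm{Tr}(\mathscr{C})=\{(\mathrm{Tr}(x_1),\ldots,\mathrm{Tr}(x_n)):x\in\mathscr{C}\}$. The induced form is $\tilde f(x,y)=\sum_{i=0}^{m-1}f((x_{in+1},\ldots,x_{in+n}),(y_{in+1},\ldots,y_{in+n}))$ for $x,y\in\mathrm{GF}(q)^{mn}$. A code $D$ is self-orthogonal w.r.t. a form $g$ if $g(x,y)=0$ for all $x,y\in D$. *)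

theory Defs
  imports "HOL-Computational_Algebra.Primes"
begin

text \<open>Setting: a finite field type 'F of cardinality q^m plays the role of GF(q^m);
GF(q) is its unique subfield of order q, namely the set of roots of X^q - X.
Vectors of GF(q^m)^n (and GF(q)^(mn)) are lists of the appropriate length.\<close>

definition prime_power :: "nat \<Rightarrow> bool" where
  "prime_power q \<longleftrightarrow> (\<exists>p k. prime p \<and> k > 0 \<and> q = p ^ k)"

definition subfield_GF :: "nat \<Rightarrow> 'F::{finite,field} set" where
  "subfield_GF q = {x. x ^ q = x}"

definition trace_GF :: "nat \<Rightarrow> nat \<Rightarrow> 'F::{finite,field} \<Rightarrow> 'F" where
  "trace_GF q m a = (\<Sum>i<m. a ^ (q ^ i))"

definition is_basis :: "nat \<Rightarrow> nat \<Rightarrow> 'F::{finite,field} list \<Rightarrow> bool" where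
  "is_basis q m B \<longleftrightarrow> length B = m \<and>
     (\<forall>x::'F. \<exists>!c::nat \<Rightarrow> 'F. (\<forall>i<m. c i \<in> subfield_GF q) \<and> (\<forall>i\<ge>m. c i = 0)
                 \<and> x = (\<Sum>i<m. c i * B ! i))"

definition is_dual :: "nat \<Rightarrow> nat \<Rightarrow> 'F::{finite,field} list \<Rightarrow> 'F list \<Rightarrow> bool" where
  "is_dual q m B B' \<longleftrightarrow> length B' = m \<and>
     (\<forall>i<m. \<forall>j<m. trace_GF q m (B ! i * B' ! j) = (if i = j then 1 else 0))"

definition dual_basis :: "nat \<Rightarrow> nat \<Rightarrow> 'F::{finite,field} list \<Rightarrow> 'F list" where
  "dual_basis q m B = (THE B'. is_basis q m B' \<and> is_dual q m B B')"

definition scalable :: "'F::field list set \<Rightarrow> bool" where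
  "scalable C \<longleftrightarrow> (\<forall>x\<in>C. \<forall>a. map (\<lambda>xi. a * xi) x \<in> C)"

definition biadditive :: "nat \<Rightarrow> ('a::ab_group_add list \<Rightarrow> 'a list \<Rightarrow> 'a) \<Rightarrow> bool" where
  "biadditive n f \<longleftrightarrow>
     (\<forall>x y z. length x = n \<longrightarrow> length y = n \<longrightarrow> length z = n \<longrightarrow>
        f (map2 (+) x y) z = f x z + f y z \<and> f x (map2 (+) y z) = f x y + f x z)"

text \<open>Im_B(C), with B' the dual basis of B:
  (Tr(b1 x1),...,Tr(b1 xn),...,Tr(bm x1),...,Tr(bm xn)).\<close>
definition im_dual :: "nat \<Rightarrow> nat \<Rightarrow> 'F::{finite,field} list \<Rightarrow> 'F list set \<Rightarrow> 'F list set" where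
  "im_dual q m B' C = (\<lambda>x. concat (map (\<lambda>b. map (\<lambda>xj. trace_GF q m (b * xj)) x) B')) ` C"

definition im_basis :: "nat \<Rightarrow> nat \<Rightarrow> 'F::{finite,field} list \<Rightarrow> 'F list set \<Rightarrow> 'F list set" where
  "im_basis q m B C = im_dual q m (dual_basis q m B) C"

definition trace_code :: "nat \<Rightarrow> nat \<Rightarrow> 'F::{finite,field} list set \<Rightarrow> 'F list set" where
  "trace_code q m C = map (trace_GF q m) ` C"

definition induced_form :: "nat \<Rightarrow> nat \<Rightarrow> ('a list \<Rightarrow> 'a list \<Rightarrow> 'b::comm_monoid_add)
    \<Rightarrow> 'a list \<Rightarrow> 'a list \<Rightarrow> 'b" where
  "induced_form m n f x y = (\<Sum>i<m. f (take n (drop (i*n) x)) (take n (drop (i*n) y)))"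

definition self_orthogonal :: "('a \<Rightarrow> 'a \<Rightarrow> 'b::zero) \<Rightarrow> 'a set \<Rightarrow> bool" where
  "self_orthogonal g D \<longleftrightarrow> (\<forall>x\<in>D. \<forall>y\<in>D. g x y = 0)"

end

theory Submission
  imports Defs "HOL-Number_Theory.Residues" "HOL-Computational_Algebra.Polynomial" "HOL-Library.FuncSet"
begin

text \<open>
  Fix codewords \<open>x, y\<close> and put \<open>K(a, b) = f(Tr(a x), Tr(b y))\<close>, a biadditive map on
  \<open>GF(q^m)\<close>. Because \<open>C\<close> is scalable, self-orthogonality of \<open>Im_B(C)\<close> says exactly that
  \<open>\<Sum>\<^sub>i K(l \<beta>\<^sub>i, w \<beta>\<^sub>i) = 0\<close> for all \<open>l, w\<close>, where \<open>\<beta>\<^sub>i\<close> is the dual basis of \<open>B\<close>.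
  The dual bases of \<open>B2, B3, B5\<close> differ from that of \<open>B1\<close> only in the first vector, so
  comparing these sums gives \<open>K(l u, w u) = K(l \<beta>\<^sub>1, w \<beta>\<^sub>1)\<close> for
  \<open>u = \<beta>\<^sub>1 + \<alpha> \<beta>\<^sub>2, \<beta>\<^sub>1 + \<gamma> \<beta>\<^sub>3, \<beta>\<^sub>1 + \<alpha> \<beta>\<^sub>2 + \<gamma> \<beta>\<^sub>3\<close>. The last of these is the sum of the
  first two minus \<open>\<beta>\<^sub>1\<close>, and additivity turns this into \<open>K(l \<beta>\<^sub>1, w c) = 0\<close> for some
  \<open>c \<noteq> 0\<close>; hence \<open>K = 0\<close>. Both conclusions follow, taking \<open>a = b = 1\<close> for the trace code
  and \<open>a = b\<close> the vectors of an arbitrary dual basis for \<open>Im_B(C)\<close>. That every basis has a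
  unique dual basis follows from the nondegeneracy of the trace form and a counting argument.
\<close>

section \<open>The trace of a finite field extension\<close>

lemma power_card_eq_self:
  fixes x :: "'a::{finite,field}"
  shows "x ^ card (UNIV :: 'a set) = x"
proof (cases "x = 0")
  case True
  then show ?thesis by (simp add: finite_UNIV_card_ge_0)
next
  case False
  let ?U = "UNIV - {0::'a}"
  have "bij_betw ((*) x) ?U ?U"
    by (rule bij_betw_byWitness[where f' = "\<lambda>y. y / x"]) (use False in auto)
  then have "(\<Prod>y\<in>?U. x * y) = \<Prod>?U"
    by (rule prod.reindex_bij_betw)
  moreover have "(\<Prod>y\<in>?U. x * y) = x ^ card ?U * \<Prod>?U"
    by (simp add: prod.distrib)
  moreover have "\<Prod>?U \<noteq> 0"
    by simp
  ultimately have "x ^ card ?U = 1"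
    by simp
  have "card (UNIV :: 'a set) = Suc (card ?U)"
    using finite_UNIV_card_ge_0[where 'a = 'a] by (simp add: card_Diff_singleton)
  then have "x ^ card (UNIV :: 'a set) = x * x ^ card ?U"
    by (simp only: power_Suc)
  with \<open>x ^ card ?U = 1\<close> show ?thesis
    by (metis mult_1_right)
qed

locale finite_field_extension =
  fixes q m :: nat and field_type :: "'F::{finite,field} itself"
  assumes prime_power_q: "prime_power q"
    and card_field: "card (UNIV :: 'F set) = q ^ m"
    and m_pos: "m > 0"
begin

abbreviation Tr :: "'F \<Rightarrow> 'F" where "Tr \<equiv> trace_GF q m"
abbreviation GF :: "'F set" where "GF \<equiv> subfield_GF q"

lemma q_gt_1: "q > 1"
proof -
  obtain p k where "prime p" "k > 0" "q = p ^ k"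
    using prime_power_q by (auto simp: prime_power_def)
  then show ?thesis
    using prime_gt_1_nat one_less_power by blast
qed

lemma prime_CHAR: "prime CHAR('F)"
  by (intro prime_CHAR_semidom finite_imp_CHAR_pos) simp

lemma q_eq_CHAR_power: "\<exists>k. q = CHAR('F) ^ k"
proof -
  obtain p k where p: "prime p" "q = p ^ k"
    using prime_power_q by (auto simp: prime_power_def)
  have "CHAR('F) dvd p ^ (k * m)"
    using CHAR_dvd_CARD[where 'a = 'F] card_field p(2) by (simp add: power_mult)
  then have "CHAR('F) = p"
    using prime_CHAR p(1) by (simp add: prime_dvd_power primes_dvd_imp_eq)
  then show ?thesis
    using p(2) by blast
qed

lemma power_q_power_add: "(x + y) ^ (q ^ i) = x ^ (q ^ i) + y ^ (q ^ i)" for x y :: 'F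
proof -
  obtain k where "q = CHAR('F) ^ k"
    using q_eq_CHAR_power by blast
  then show ?thesis
    by (intro freshmans_dream' prime_CHAR) (simp flip: power_mult)
qed

lemma power_q_power_sum: "sum g A ^ (q ^ i) = (\<Sum>a\<in>A. g a ^ (q ^ i))" for g :: "'a \<Rightarrow> 'F"
proof -
  obtain k where "q = CHAR('F) ^ k"
    using q_eq_CHAR_power by blast
  then show ?thesis
    by (intro freshmans_dream_sum' prime_CHAR) (simp flip: power_mult)
qed

lemma power_q_power_m: "x ^ (q ^ m) = x" for x :: 'F
  using power_card_eq_self[of x] card_field by simp

lemma subfield_power_q_power: "c \<in> GF \<Longrightarrow> c ^ (q ^ i) = c"
  by (induction i) (simp_all add: subfield_GF_def power_mult mult.commute)

lemma zero_in_subfield: "0 \<in> GF" and one_in_subfield: "1 \<in> GF"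
  using q_gt_1 by (auto simp: subfield_GF_def)

lemma trace_add: "Tr (x + y) = Tr x + Tr y"
  by (simp add: trace_GF_def power_q_power_add sum.distrib)

lemma trace_zero: "Tr 0 = 0"
  using q_gt_1 by (simp add: trace_GF_def power_0_left)

lemma trace_diff: "Tr (x - y) = Tr x - Tr y"
  using trace_add[of "x - y" y] by (simp add: algebra_simps)

lemma trace_sum: "Tr (sum g A) = (\<Sum>a\<in>A. Tr (g a))"
  by (simp add: trace_GF_def power_q_power_sum sum.swap[of _ A])

lemma trace_scale: "c \<in> GF \<Longrightarrow> Tr (c * x) = c * Tr x"
  by (simp add: trace_GF_def power_mult_distrib subfield_power_q_power sum_distrib_left)

lemma trace_in_subfield: "Tr x \<in> GF"
proof -
  let ?g = "\<lambda>i. x ^ (q ^ i)"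
  have "Tr x ^ q = (\<Sum>i<m. ?g (Suc i))"
    using power_q_power_sum[of ?g "{..<m}" 1] by (simp add: trace_GF_def mult.commute flip: power_mult)
  also have "\<dots> = Tr x"
  proof -
    have "?g 0 + (\<Sum>i<m. ?g (Suc i)) = (\<Sum>i<m. ?g i) + ?g m"
      unfolding sum.lessThan_Suc_shift[of ?g m, symmetric] by (rule sum.lessThan_Suc)
    then show ?thesis
      by (simp add: power_q_power_m trace_GF_def)
  qed
  finally show ?thesis
    by (simp add: subfield_GF_def)
qed

lemma trace_not_identically_zero: "\<exists>z. Tr z \<noteq> 0"
proof (rule ccontr)
  assume "\<nexists>z. Tr z \<noteq> 0"
  define P :: "'F poly" where "P = (\<Sum>i<m. monom 1 (q ^ i))"
  have poly_P: "poly P x = Tr x" for x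
    by (simp add: P_def trace_GF_def poly_sum poly_monom)
  have "coeff P 1 = (\<Sum>i<m. if i = 0 then 1 else 0)"
    unfolding P_def coeff_sum using q_gt_1 by (intro sum.cong) auto
  then have "P \<noteq> 0"
    using m_pos by auto
  then have "card {x. poly P x = 0} \<le> degree P"
    by (rule card_poly_roots_bound)
  also have "degree P \<le> q ^ (m - 1)"
    unfolding P_def using q_gt_1
    by (intro degree_sum_le) (auto simp: degree_monom_eq intro: power_increasing)
  also have "\<dots> < q ^ m"
    using q_gt_1 m_pos by (intro power_strict_increasing) auto
  also have "q ^ m = card {x. poly P x = 0}"
    using \<open>\<nexists>z. Tr z \<noteq> 0\<close> card_field by (simp add: poly_P)
  finally show False
    by simp
qed

lemma card_subfield_le: "card GF \<le> q"
proof -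
  define P :: "'F poly" where "P = monom 1 q - monom 1 1"
  have "coeff P q = 1"
    using q_gt_1 by (simp add: P_def)
  then have "P \<noteq> 0"
    by auto
  have "GF = {x. poly P x = 0}"
    by (simp add: P_def poly_monom subfield_GF_def)
  also have "card \<dots> \<le> degree P"
    by (rule card_poly_roots_bound) fact
  also have "degree P \<le> q"
    unfolding P_def using q_gt_1 by (intro degree_diff_le) (auto simp: degree_monom_eq)
  finally show ?thesis .
qed

lemma trace_form_nondegenerate:
  assumes B: "is_basis q m B" and z: "\<forall>i<m. Tr (B ! i * z) = 0"
  shows "z = 0"
proof (rule ccontr)
  assume "z \<noteq> 0"
  obtain z0 where z0: "Tr z0 \<noteq> 0"
    using trace_not_identically_zero by blast
  obtain c where c: "\<forall>i<m. c i \<in> GF" "z0 / z = (\<Sum>i<m. c i * B ! i)"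
    using B unfolding is_basis_def by blast
  have "z0 = z0 / z * z"
    using \<open>z \<noteq> 0\<close> by simp
  also have "\<dots> = (\<Sum>i<m. c i * (B ! i * z))"
    unfolding c(2) by (simp add: sum_distrib_right mult.assoc)
  finally have "Tr z0 = (\<Sum>i<m. c i * Tr (B ! i * z))"
    using c(1) by (simp add: trace_sum trace_scale)
  with z z0 show False
    by simp
qed

section \<open>Dual bases\<close>

definition coord_space :: "(nat \<Rightarrow> 'F) set" where
  "coord_space = {c. (\<forall>i<m. c i \<in> GF) \<and> (\<forall>i\<ge>m. c i = 0)}"

definition trace_coords :: "'F list \<Rightarrow> 'F \<Rightarrow> nat \<Rightarrow> 'F" where
  "trace_coords B z i = (if i < m then Tr (B ! i * z) else 0)"

lemma is_basis_iff_coord_space: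
  "is_basis q m B \<longleftrightarrow> length B = m \<and> (\<forall>x. \<exists>!c. c \<in> coord_space \<and> x = (\<Sum>i<m. c i * B ! i))"
  by (simp add: is_basis_def coord_space_def)

lemma inj_trace_coords:
  assumes "is_basis q m B"
  shows "inj (trace_coords B)"
proof (rule injI)
  fix z z' assume same: "trace_coords B z = trace_coords B z'"
  have "Tr (B ! i * (z - z')) = 0" if "i < m" for i
    using fun_cong[OF same, of i] that by (simp add: trace_coords_def right_diff_distrib trace_diff)
  then show "z = z'"
    using trace_form_nondegenerate[OF assms, of "z - z'"] by simp
qed

lemma finite_coord_space: "finite coord_space"
  and card_coord_space_le: "card coord_space \<le> q ^ m"
proof -
  let ?r = "\<lambda>c. restrict c {..<m}"
  have inj: "inj_on ?r coord_space"
  proof (rule inj_onI, rule ext)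
    fix c c' i assume "c \<in> coord_space" "c' \<in> coord_space" "?r c = ?r c'"
    then show "c i = c' i"
      by (cases "i < m") (auto simp: coord_space_def dest: fun_cong[where x = i])
  qed
  have img: "?r ` coord_space \<subseteq> PiE {..<m} (\<lambda>_. GF)"
    by (rule image_subsetI) (auto simp: coord_space_def)
  have fin: "finite (PiE {..<m} (\<lambda>_. GF))"
    by (intro finite_PiE) auto
  show "finite coord_space"
    by (rule inj_on_finite[OF inj img fin])
  have "card coord_space \<le> card (PiE {..<m} (\<lambda>_. GF))"
    by (rule card_inj_on_le[OF inj img fin])
  also have "\<dots> = card GF ^ m"
    by (simp add: card_PiE)
  also have "\<dots> \<le> q ^ m"
    by (intro power_mono card_subfield_le) auto
  finally show "card coord_space \<le> q ^ m" .
qed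

lemma range_trace_coords:
  assumes "is_basis q m B"
  shows "range (trace_coords B) = coord_space"
proof (rule card_subset_eq[OF finite_coord_space])
  show "range (trace_coords B) \<subseteq> coord_space"
    using trace_in_subfield zero_in_subfield by (auto simp: coord_space_def trace_coords_def)
  have "card (range (trace_coords B)) = q ^ m"
    using card_image[OF inj_trace_coords[OF assms]] card_field by simp
  then show "card (range (trace_coords B)) = card coord_space"
    using card_coord_space_le card_mono[OF finite_coord_space \<open>range (trace_coords B) \<subseteq> coord_space\<close>]
    by simp
qed

lemma trace_coords_dual_combination:
  assumes "is_dual q m B D" and "c \<in> coord_space"
  shows "trace_coords B (\<Sum>j<m. c j * D ! j) = c"
proof
  fix i
  show "trace_coords B (\<Sum>j<m. c j * D ! j) i = c i"
  proof (cases "i < m")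
    case True
    have "Tr (B ! i * (\<Sum>j<m. c j * D ! j)) = (\<Sum>j<m. c j * Tr (B ! i * D ! j))"
      using assms(2) by (simp add: sum_distrib_left mult.left_commute trace_sum trace_scale coord_space_def)
    also have "\<dots> = (\<Sum>j<m. if j = i then c j else 0)"
      using assms(1) True by (intro sum.cong) (auto simp: is_dual_def)
    also have "\<dots> = c i"
      using True by simp
    finally show ?thesis
      using True by (simp add: trace_coords_def)
  qed (use assms(2) in \<open>simp add: trace_coords_def coord_space_def\<close>)
qed

lemma dual_is_basis:
  fixes B D :: "'F list"
  assumes B: "is_basis q m B" and D: "is_dual q m B D"
  shows "is_basis q m D"
  unfolding is_basis_iff_coord_space
proof (intro conjI allI)
  show "length D = m"
    using D by (simp add: is_dual_def)
  fix x
  show "\<exists>!c. c \<in> coord_space \<and> x = (\<Sum>j<m. c j * D ! j)"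
  proof (rule ex1I[of _ "trace_coords B x"])
    have "trace_coords B (\<Sum>j<m. trace_coords B x j * D ! j) = trace_coords B x"
      using trace_coords_dual_combination[OF D] range_trace_coords[OF B] by blast
    then show "trace_coords B x \<in> coord_space \<and> x = (\<Sum>j<m. trace_coords B x j * D ! j)"
      using range_trace_coords[OF B] inj_trace_coords[OF B] by (auto dest: injD)
    show "c = trace_coords B x" if "c \<in> coord_space \<and> x = (\<Sum>j<m. c j * D ! j)" for c
      using trace_coords_dual_combination[OF D] that by simp
  qed
qed

lemma dual_unique:
  fixes B D D' :: "'F list"
  assumes B: "is_basis q m B" and "is_dual q m B D" and "is_dual q m B D'"
  shows "D = D'"
proof (rule nth_equalityI)
  show "length D = length D'"
    using assms(2,3) by (simp add: is_dual_def)
  fix j assume "j < length D"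
  then have "trace_coords B (D ! j) = trace_coords B (D' ! j)"
    using assms(2,3) by (auto simp: is_dual_def trace_coords_def fun_eq_iff)
  then show "D ! j = D' ! j"
    using inj_trace_coords[OF B] by (rule injD[rotated])
qed

lemma dual_exists:
  fixes B :: "'F list"
  assumes B: "is_basis q m B"
  shows "\<exists>D. is_dual q m B D"
proof -
  define e where "e j = (\<lambda>i. if i = j then 1 else 0 :: 'F)" for j :: nat
  define D where "D = map (\<lambda>j. inv_into UNIV (trace_coords B) (e j)) [0..<m]"
  have coords: "trace_coords B (D ! j) = e j" if "j < m" for j
  proof -
    have "e j \<in> range (trace_coords B)"
      using that zero_in_subfield one_in_subfield
      by (simp add: range_trace_coords[OF B] coord_space_def e_def)
    then show ?thesis
      using that by (simp add: D_def f_inv_into_f)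
  qed
  have "is_dual q m B D"
    unfolding is_dual_def
  proof (intro conjI allI impI)
    show "length D = m"
      by (simp add: D_def)
    fix i j assume "i < m" "j < m"
    then show "Tr (B ! i * D ! j) = (if i = j then 1 else 0)"
      using fun_cong[OF coords[of j], of i] by (simp add: trace_coords_def e_def)
  qed
  then show ?thesis ..
qed

lemma dual_basis_eq:
  fixes B D :: "'F list"
  assumes "is_basis q m B" and "is_dual q m B D"
  shows "dual_basis q m B = D"
  unfolding dual_basis_def
  using assms dual_is_basis dual_unique by (intro the_equality) blast+

lemma is_dual_dual_basis:
  fixes B :: "'F list"
  assumes "is_basis q m B"
  shows "is_dual q m B (dual_basis q m B)"
  using assms dual_exists dual_basis_eq by metis

end

section \<open>A vanishing criterion for biadditive maps\<close>

lemma biadditive_eq_0_of_scaling_invariance: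
  fixes K :: "'a::field \<Rightarrow> 'a \<Rightarrow> 'b::ab_group_add"
  assumes add_left: "\<And>a a' b. K (a + a') b = K a b + K a' b"
    and add_right: "\<And>a b b'. K a (b + b') = K a b + K a b'"
    and inv_b: "\<And>l w. K (l * ub) (w * ub) = K (l * ua) (w * ua)"
    and inv_c: "\<And>l w. K (l * uc) (w * uc) = K (l * ua) (w * ua)"
    and inv_d: "\<And>l w. K (l * ud) (w * ud) = K (l * ua) (w * ua)"
    and ud: "ud = ub + uc - ua"
    and nonzero: "ua \<noteq> 0" "ub \<noteq> 0" "uc \<noteq> 0" "ud \<noteq> 0" "ub \<noteq> ua" "uc \<noteq> ua" "ub + uc \<noteq> 0"
  shows "K a b = 0"
proof -
  have diff_left: "K (a - a') b = K a b - K a' b" for a a' b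
    using add_left[of "a - a'" a' b] by (simp add: algebra_simps)
  have diff_right: "K a (b - b') = K a b - K a b'" for a b b'
    using add_right[of a "b - b'" b'] by (simp add: algebra_simps)
  have move: "K (l * u) w = K (l * ua) (w / u * ua)"
    if inv_u: "\<And>l w. K (l * u) (w * u) = K (l * ua) (w * ua)" and "u \<noteq> 0" for l w u
    using inv_u[of l "w / u"] \<open>u \<noteq> 0\<close> by simp
  define c where "c = 1 - (ua / ub + ua / uc - ua / ud)"
  \<comment> \<open>Split \<open>l * ua = l * ub + l * uc - l * ud\<close> and move each \<open>u\<close> into the second argument.\<close>
  have vanish: "K (l * ua) (w * c) = 0" for l w
  proof -
    have "l * ua = l * ub + l * uc - l * ud"
      by (simp add: ud algebra_simps)
    then have "K (l * ua) w = K (l * ub) w + K (l * uc) w - K (l * ud) w"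
      by (simp add: diff_left add_left)
    also have "\<dots> = K (l * ua) (w / ub * ua + w / uc * ua - w / ud * ua)"
      using move[OF inv_b nonzero(2)] move[OF inv_c nonzero(3)] move[OF inv_d nonzero(4)]
      by (simp add: diff_right add_right)
    also have "w / ub * ua + w / uc * ua - w / ud * ua = w - w * c"
      by (simp add: c_def algebra_simps)
    finally show ?thesis
      by (simp add: diff_right)
  qed
  have "ub * uc * ud * c = ub * uc * ud - ua * uc * ud - ua * ub * ud + ua * ub * uc"
    using nonzero by (simp add: c_def field_simps)
  also have "\<dots> = (ub + uc) * (ub - ua) * (uc - ua)"
    by (simp add: ud algebra_simps)
  finally have "ub * uc * ud * c = (ub + uc) * (ub - ua) * (uc - ua)" .
  then have "c \<noteq> 0"
    using nonzero by auto
  then show ?thesis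
    using vanish[of "a / ua" "b / c"] nonzero(1) by simp
qed

section \<open>Trace images of scalable codes\<close>

lemma take_drop_concat_map_block:
  assumes "length x = n" and "i < length D"
  shows "take n (drop (i * n) (concat (map (\<lambda>b. map (h b) x) D))) = map (h (D ! i)) x"
  using assms(2)
proof (induction D arbitrary: i)
  case (Cons d D)
  then show ?case
    using assms(1) by (cases i) (simp_all add: add.commute)
qed simp

lemma induced_form_concat_map:
  assumes "length D = m" and "length x = n" and "length y = n"
  shows "induced_form m n f (concat (map (\<lambda>b. map (h b) x) D)) (concat (map (\<lambda>b. map (h b) y) D))
    = (\<Sum>i<m. f (map (h (D ! i)) x) (map (h (D ! i)) y))"
  using assms by (simp add: induced_form_def take_drop_concat_map_block)

lemma sum_nth_list_update:
  fixes g :: "'a \<Rightarrow> 'b::ab_group_add"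
  assumes "k < length D"
  shows "(\<Sum>i<length D. g (D[k := u] ! i)) = (\<Sum>i<length D. g (D ! i)) - g (D ! k) + g u"
proof -
  have split: "(\<Sum>i<length D. h i) = h k + (\<Sum>i\<in>{..<length D} - {k}. h i)" for h :: "nat \<Rightarrow> 'b"
    using assms by (subst sum.remove[of _ k]) auto
  have "(\<Sum>i\<in>{..<length D} - {k}. g (D[k := u] ! i)) = (\<Sum>i\<in>{..<length D} - {k}. g (D ! i))"
    by (intro sum.cong) auto
  then show ?thesis
    using split[of "\<lambda>i. g (D[k := u] ! i)"] split[of "\<lambda>i. g (D ! i)"] assms by simp
qed

context finite_field_extension
begin

definition trace_word :: "'F \<Rightarrow> 'F list \<Rightarrow> 'F list" where
  "trace_word a x = map (\<lambda>xj. Tr (a * xj)) x"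

lemma length_trace_word [simp]: "length (trace_word a x) = length x"
  by (simp add: trace_word_def)

lemma trace_word_add: "trace_word (a + b) x = map2 (+) (trace_word a x) (trace_word b x)"
  by (induction x) (simp_all add: trace_word_def distrib_right trace_add)

lemma trace_word_scaled: "trace_word a (map (\<lambda>xi. l * xi) x) = trace_word (l * a) x"
  by (simp add: trace_word_def mult_ac)

lemma biadditive_trace_word_form:
  assumes "biadditive n f" and "length x = n" and "length y = n"
  shows "f (trace_word (a + a') x) (trace_word b y)
      = f (trace_word a x) (trace_word b y) + f (trace_word a' x) (trace_word b y)"
    and "f (trace_word a x) (trace_word (b + b') y)
      = f (trace_word a x) (trace_word b y) + f (trace_word a x) (trace_word b' y)"
  using assms by (simp_all add: biadditive_def trace_word_add)

lemma im_basis_eq_im_dual: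
  fixes B D :: "'F list"
  assumes "is_basis q m B" and "is_dual q m B D"
  shows "im_basis q m B C = im_dual q m D C"
  using assms by (simp add: im_basis_def dual_basis_eq)

lemma self_orthogonal_im_dual_iff:
  assumes "length D = m" and "\<forall>x\<in>C. length x = n"
  shows "self_orthogonal (induced_form m n f) (im_dual q m D C) \<longleftrightarrow>
    (\<forall>x\<in>C. \<forall>y\<in>C. (\<Sum>i<m. f (trace_word (D ! i) x) (trace_word (D ! i) y)) = 0)"
  using assms
  by (simp add: self_orthogonal_def im_dual_def induced_form_concat_map trace_word_def)

lemma scaled_diagonal_sum_eq_0:
  fixes f :: "'F list \<Rightarrow> 'F list \<Rightarrow> 'b::comm_monoid_add"
  assumes "scalable C" and "\<forall>x\<in>C. length x = n" and "length D = m"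
    and "self_orthogonal (induced_form m n f) (im_dual q m D C)"
    and "x \<in> C" and "y \<in> C"
  shows "(\<Sum>i<m. f (trace_word (l * D ! i) x) (trace_word (w * D ! i) y)) = 0"
proof -
  have "map (\<lambda>xi. l * xi) x \<in> C" and "map (\<lambda>yi. w * yi) y \<in> C"
    using assms(1,5,6) by (simp_all add: scalable_def)
  with assms(2-4) have
    "(\<Sum>i<m. f (trace_word (D ! i) (map (\<lambda>xi. l * xi) x)) (trace_word (D ! i) (map (\<lambda>yi. w * yi) y))) = 0"
    by (simp add: self_orthogonal_im_dual_iff)
  then show ?thesis
    by (simp add: trace_word_scaled)
qed

lemma scaling_invariant_of_dual_update:
  fixes f :: "'F list \<Rightarrow> 'F list \<Rightarrow> 'b::ab_group_add" and B B' D :: "'F list"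
  assumes "scalable C" and "\<forall>x\<in>C. length x = n" and "k < m"
    and B: "is_basis q m B" "is_dual q m B D"
      "self_orthogonal (induced_form m n f) (im_basis q m B C)"
    and B': "is_basis q m B'" "is_dual q m B' (D[k := u])"
      "self_orthogonal (induced_form m n f) (im_basis q m B' C)"
    and xy: "x \<in> C" "y \<in> C"
  shows "f (trace_word (l * u) x) (trace_word (w * u) y)
    = f (trace_word (l * D ! k) x) (trace_word (w * D ! k) y)"
proof -
  let ?g = "\<lambda>d. f (trace_word (l * d) x) (trace_word (w * d) y)"
  have length_D: "length D = m"
    using B(2) by (simp add: is_dual_def)
  have "(\<Sum>i<m. ?g (D ! i)) = 0"
    using length_D B(3) im_basis_eq_im_dual[OF B(1,2)]
    by (intro scaled_diagonal_sum_eq_0[OF assms(1,2) _ _ xy]) simp_all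
  moreover have "(\<Sum>i<m. ?g (D[k := u] ! i)) = 0"
    using length_D B'(3) im_basis_eq_im_dual[OF B'(1,2)]
    by (intro scaled_diagonal_sum_eq_0[OF assms(1,2) _ _ xy]) simp_all
  ultimately show ?thesis
    using sum_nth_list_update[of k D ?g u] assms(3) length_D by simp
qed

lemma add_in_subfield: "a \<in> GF \<Longrightarrow> b \<in> GF \<Longrightarrow> a + b \<in> GF"
  using power_q_power_add[of a b 1] by (simp add: subfield_GF_def)

lemma shifted_dual_elements_nondegenerate:
  fixes B \<beta> :: "'F list"
  assumes dual: "is_dual q m B \<beta>" and "m > 2"
    and \<alpha>: "\<alpha> \<in> GF" "\<alpha> \<noteq> 0" and \<gamma>: "\<gamma> \<in> GF" "\<gamma> \<noteq> 0"
  shows "\<beta> ! 0 \<noteq> 0" "\<beta> ! 0 + \<alpha> * \<beta> ! 1 \<noteq> 0" "\<beta> ! 0 + \<gamma> * \<beta> ! 2 \<noteq> 0"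
    "\<beta> ! 0 + \<alpha> * \<beta> ! 1 + \<gamma> * \<beta> ! 2 \<noteq> 0"
    "\<beta> ! 0 + \<alpha> * \<beta> ! 1 \<noteq> \<beta> ! 0" "\<beta> ! 0 + \<gamma> * \<beta> ! 2 \<noteq> \<beta> ! 0"
    "(\<beta> ! 0 + \<alpha> * \<beta> ! 1) + (\<beta> ! 0 + \<gamma> * \<beta> ! 2) \<noteq> 0"
proof -
  have pair: "Tr (B ! k * \<beta> ! j) = (if k = j then 1 else 0)" if "k < 3" "j < 3" for k j
    using dual that \<open>m > 2\<close> by (simp add: is_dual_def)
  have combination_ne_0: "a * \<beta> ! 0 + b * \<beta> ! 1 + c * \<beta> ! 2 \<noteq> 0"
    if "a \<in> GF" "b \<in> GF" "c \<in> GF" "a \<noteq> 0 \<or> b \<noteq> 0 \<or> c \<noteq> 0" for a b c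
  proof
    assume zero: "a * \<beta> ! 0 + b * \<beta> ! 1 + c * \<beta> ! 2 = 0"
    have expand: "Tr (B ! k * (a * \<beta> ! 0 + b * \<beta> ! 1 + c * \<beta> ! 2))
        = a * Tr (B ! k * \<beta> ! 0) + b * Tr (B ! k * \<beta> ! 1) + c * Tr (B ! k * \<beta> ! 2)" for k
      using that by (simp add: distrib_left trace_add trace_scale mult.left_commute[of "B ! k"])
    have "Tr (B ! k * (a * \<beta> ! 0 + b * \<beta> ! 1 + c * \<beta> ! 2)) = 0" for k
      unfolding zero by (simp add: trace_zero)
    then have vanish: "a * Tr (B ! k * \<beta> ! 0) + b * Tr (B ! k * \<beta> ! 1) + c * Tr (B ! k * \<beta> ! 2) = 0"
      for k
      by (rule trans[OF expand[symmetric]])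
    have "a = 0" "b = 0" "c = 0"
      using vanish[of 0] vanish[of 1] vanish[of 2] pair[of 0] pair[of 1] pair[of 2] by simp_all
    with that(4) show False
      by simp
  qed
  show "\<beta> ! 0 \<noteq> 0" "\<beta> ! 0 + \<alpha> * \<beta> ! 1 \<noteq> 0" "\<beta> ! 0 + \<gamma> * \<beta> ! 2 \<noteq> 0"
    "\<beta> ! 0 + \<alpha> * \<beta> ! 1 + \<gamma> * \<beta> ! 2 \<noteq> 0"
    "\<beta> ! 0 + \<alpha> * \<beta> ! 1 \<noteq> \<beta> ! 0" "\<beta> ! 0 + \<gamma> * \<beta> ! 2 \<noteq> \<beta> ! 0"
    using combination_ne_0[of 1 0 0] combination_ne_0[of 1 \<alpha> 0] combination_ne_0[of 1 0 \<gamma>]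
      combination_ne_0[of 1 \<alpha> \<gamma>] combination_ne_0[of 0 \<alpha> 0] combination_ne_0[of 0 0 \<gamma>]
      zero_in_subfield one_in_subfield \<alpha> \<gamma>
    by simp_all
  have "(\<beta> ! 0 + \<alpha> * \<beta> ! 1) + (\<beta> ! 0 + \<gamma> * \<beta> ! 2) = (1 + 1) * \<beta> ! 0 + \<alpha> * \<beta> ! 1 + \<gamma> * \<beta> ! 2"
    by (simp add: algebra_simps)
  also have "\<dots> \<noteq> 0"
    using add_in_subfield[OF one_in_subfield one_in_subfield] \<alpha> \<gamma> by (intro combination_ne_0) auto
  finally show "(\<beta> ! 0 + \<alpha> * \<beta> ! 1) + (\<beta> ! 0 + \<gamma> * \<beta> ! 2) \<noteq> 0" .
qed

end

theorem theorem5: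
  fixes C :: "'F::{finite,field} list set"
    and f :: "'F list \<Rightarrow> 'F list \<Rightarrow> 'F"
    and q m n :: nat
    and \<beta> B1 B2 B3 B4 B5 :: "'F list"
    and \<alpha> \<gamma> \<delta> :: 'F
  assumes q: "prime_power q"
    and card: "card (UNIV :: 'F set) = q ^ m"
    and m: "m > 2" and n: "n \<ge> 1"
    and C_len: "\<forall>x\<in>C. length x = n"
    and C_scal: "scalable C"
    and f_biadd: "biadditive n f"
    and \<alpha>: "\<alpha> \<in> subfield_GF q" "\<alpha> \<noteq> 0"
    and \<gamma>: "\<gamma> \<in> subfield_GF q" "\<gamma> \<noteq> 0"
    and \<delta>: "\<delta> \<in> subfield_GF q" "\<delta> \<noteq> 0"
    and B1: "is_basis q m B1" "is_dual q m B1 \<beta>"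
    and B2: "is_basis q m B2" "is_dual q m B2 (\<beta>[0 := \<beta> ! 0 + \<alpha> * \<beta> ! 1])"
    and B3: "is_basis q m B3" "is_dual q m B3 (\<beta>[0 := \<beta> ! 0 + \<gamma> * \<beta> ! 2])"
    and B4: "is_basis q m B4" "is_dual q m B4 (\<beta>[1 := \<beta> ! 1 + \<delta> * \<beta> ! 2])"
    and B5: "is_basis q m B5"
            "is_dual q m B5 (\<beta>[0 := \<beta> ! 0 + \<alpha> * \<beta> ! 1 + \<gamma> * \<beta> ! 2])"
    and so: "self_orthogonal (induced_form m n f) (im_basis q m B1 C)"
            "self_orthogonal (induced_form m n f) (im_basis q m B2 C)"
            "self_orthogonal (induced_form m n f) (im_basis q m B3 C)"
            "self_orthogonal (induced_form m n f) (im_basis q m B4 C)"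
            "self_orthogonal (induced_form m n f) (im_basis q m B5 C)"
  shows "self_orthogonal f (trace_code q m C) \<and>
         (\<forall>B. is_basis q m B \<longrightarrow> self_orthogonal (induced_form m n f) (im_basis q m B C))"
proof -
  interpret finite_field_extension q m "TYPE('F)"
    using q card m by unfold_locales auto
  have invariant: "f (trace_word (l * u) x) (trace_word (w * u) y)
      = f (trace_word (l * \<beta> ! 0) x) (trace_word (w * \<beta> ! 0) y)"
    if "is_basis q m B'" "is_dual q m B' (\<beta>[0 := u])"
      "self_orthogonal (induced_form m n f) (im_basis q m B' C)" "x \<in> C" "y \<in> C"
    for B' u x y l w
    using m by (intro scaling_invariant_of_dual_update[OF C_scal C_len _ B1 so(1) that]) simp
  have vanish: "f (trace_word a x) (trace_word b y) = 0" if "x \<in> C" "y \<in> C" for x y a b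
  proof -
    have "length x = n" "length y = n"
      using C_len that by auto
    note additive = biadditive_trace_word_form[OF f_biadd this]
    show ?thesis
      by (rule biadditive_eq_0_of_scaling_invariance[where K = "\<lambda>a b. f (trace_word a x) (trace_word b y)",
            OF additive invariant[OF B2 so(2) that] invariant[OF B3 so(3) that]
            invariant[OF B5 so(5) that] _ shifted_dual_elements_nondegenerate[OF B1(2) m \<alpha> \<gamma>]])
        (simp add: algebra_simps)
  qed
  show ?thesis
  proof (intro conjI allI impI)
    have "map Tr x = trace_word 1 x" for x
      by (simp add: trace_word_def)
    then show "self_orthogonal f (trace_code q m C)"
      using vanish by (simp add: self_orthogonal_def trace_code_def)
    fix B :: "'F list"
    assume "is_basis q m B"
    then have "length (dual_basis q m B) = m"
      using is_dual_dual_basis by (simp add: is_dual_def)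
    then show "self_orthogonal (induced_form m n f) (im_basis q m B C)"
      using C_len vanish by (simp add: im_basis_def self_orthogonal_im_dual_iff)
  qed
qed

end
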